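(* The class $\mathcal M_2$ of $2$-modular matroids is closed under duality: if $M\in\mathcal M_2$ then $M^*\in\mathcal M_2$.
   Context: An integer matrix $A$ is $\Delta$-modular if the determinant of every $\operatorname{rank}(A)\times\operatorname{rank}(A)$ submatrix has absolute value at most $\Delta$. $\mathcal M_\Delta$ is the class of matroids that are isomorphic to the vector matroid over $\mathbb{R}$ of the columns of some $\Delta$-modular matrix. *)

theory Defs
  imports "Jordan_Normal_Form.DL_Rank" "Jordan_Normal_Form.DL_Submatrix"
begin

definition matroid :: "'a set \<Rightarrow> ('a set \<Rightarrow> bool) \<Rightarrow> bool" where
  "matroid E indep \<longleftrightarrow>
     finite E \<and>
     (\<forall>X. indep X \<longrightarrow> X \<subseteq> E) \<and>
     indep {} \<and>
     (\<forall>X Y. indep Y \<and> X \<subseteq> Y \<longrightarrow> indep X) \<and>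
     (\<forall>X Y. indep X \<and> indep Y \<and> card X < card Y \<longrightarrow>
        (\<exists>y \<in> Y - X. indep (insert y X)))"

definition basis_of :: "'a set \<Rightarrow> ('a set \<Rightarrow> bool) \<Rightarrow> 'a set \<Rightarrow> bool" where
  "basis_of E indep B \<longleftrightarrow> indep B \<and> (\<forall>X. indep X \<and> B \<subseteq> X \<longrightarrow> X = B)"

definition dual_indep :: "'a set \<Rightarrow> ('a set \<Rightarrow> bool) \<Rightarrow> 'a set \<Rightarrow> bool" where
  "dual_indep E indep X \<longleftrightarrow> X \<subseteq> E \<and> (\<exists>B. basis_of E indep B \<and> X \<inter> B = {})"

definition matroid_iso ::
  "'a set \<Rightarrow> ('a set \<Rightarrow> bool) \<Rightarrow> 'b set \<Rightarrow> ('b set \<Rightarrow> bool) \<Rightarrow> bool" where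
  "matroid_iso E indep E' indep' \<longleftrightarrow>
     matroid E indep \<and> matroid E' indep' \<and>
     (\<exists>f. bij_betw f E E' \<and> (\<forall>X. X \<subseteq> E \<longrightarrow> (indep X \<longleftrightarrow> indep' (f ` X))))"

definition col_indep :: "int mat \<Rightarrow> nat set \<Rightarrow> bool" where
  "col_indep A S \<longleftrightarrow> S \<subseteq> {..<dim_col A} \<and>
     (\<forall>c :: nat \<Rightarrow> real.
        (\<forall>i < dim_row A. (\<Sum>j\<in>S. c j * real_of_int (A $$ (i, j))) = 0)
          \<longrightarrow> (\<forall>j\<in>S. c j = 0))"

definition int_rank :: "int mat \<Rightarrow> nat" where
  "int_rank A = vec_space.rank (dim_row A) (map_mat real_of_int A)"

definition delta_modular :: "int \<Rightarrow> int mat \<Rightarrow> bool" where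
  "delta_modular \<Delta> A \<longleftrightarrow>
     (\<forall>I J. I \<subseteq> {..<dim_row A} \<and> J \<subseteq> {..<dim_col A} \<and>
            card I = int_rank A \<and> card J = int_rank A
        \<longrightarrow> \<bar>det (submatrix A I J)\<bar> \<le> \<Delta>)"

definition in_M_delta :: "int \<Rightarrow> 'a set \<Rightarrow> ('a set \<Rightarrow> bool) \<Rightarrow> bool" where
  "in_M_delta \<Delta> E indep \<longleftrightarrow>
     (\<exists>A :: int mat. delta_modular \<Delta> A \<and>
        matroid_iso E indep {..<dim_col A} (col_indep A))"

end

theory Submission
  imports Defs "Jordan_Normal_Form.DL_Rank_Submatrix"
begin

(* Let A be 2-modular of rank r and pick rows I0 and columns B0 with |I0| = |B0| = r such that
   D = det A[I0,B0] is nonzero and minimal in absolute value among the nonzero minors det A[I0,J].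
   Writing every column of A in the basis B0 gives a real matrix T with A[I0,-] = A[I0,B0] T, so
   every maximal minor of T equals det A[I0,J] / D. As 0 < |D| <= |det A[I0,J]| <= 2 whenever
   det A[I0,J] is nonzero, D divides det A[I0,J]; padding with unit columns, every minor of T is
   thus an integer of absolute value at most 2. The integer matrix [-T_N^T | 1] on the non-basis columns N represents the dual
   matroid, and its minors are, up to sign, minors of T. *)

section \<open>Matroids\<close>

lemma matroidD:
  assumes "matroid E indep"
  shows matroid_finite: "finite E"
    and matroid_indep_subset: "indep X \<Longrightarrow> X \<subseteq> E"
    and matroid_indep_empty: "indep {}"
    and matroid_indep_mono: "indep Y \<Longrightarrow> X \<subseteq> Y \<Longrightarrow> indep X"
    and matroid_augment: "indep X \<Longrightarrow> indep Y \<Longrightarrow> card X < card Y \<Longrightarrow> \<exists>y\<in>Y - X. indep (insert y X)"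
  using assms unfolding matroid_def by blast+

lemma matroidI:
  assumes "finite E" "\<And>X. indep X \<Longrightarrow> X \<subseteq> E" "indep {}"
    "\<And>X Y. indep Y \<Longrightarrow> X \<subseteq> Y \<Longrightarrow> indep X"
    "\<And>X Y. indep X \<Longrightarrow> indep Y \<Longrightarrow> card X < card Y \<Longrightarrow> \<exists>y\<in>Y - X. indep (insert y X)"
  shows "matroid E indep"
  unfolding matroid_def using assms by blast

lemma basis_ofD:
  assumes "basis_of E indep B"
  shows basis_of_indep: "indep B"
    and basis_of_maximal: "indep X \<Longrightarrow> B \<subseteq> X \<Longrightarrow> X = B"
  using assms unfolding basis_of_def by blast+

lemma basis_ofI:
  assumes "indep B" "\<And>X. indep X \<Longrightarrow> B \<subseteq> X \<Longrightarrow> X = B"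
  shows "basis_of E indep B"
  unfolding basis_of_def using assms by blast

lemma matroid_card_le_basis:
  assumes "matroid E indep" "indep X" "basis_of E indep B"
  shows "card X \<le> card B"
proof (rule ccontr)
  assume "\<not> ?thesis"
  then obtain y where y: "y \<in> X - B" "indep (insert y B)"
    using matroid_augment[OF assms(1) basis_of_indep[OF assms(3)] assms(2)] by auto
  then show False using basis_of_maximal[OF assms(3) y(2)] by blast
qed

lemma matroid_maximal_indep_subset:
  assumes "matroid E indep" "S \<subseteq> E"
  obtains I where "I \<subseteq> S" "indep I" "\<And>J. indep J \<Longrightarrow> I \<subseteq> J \<Longrightarrow> J \<subseteq> S \<Longrightarrow> J = I"
proof -
  have fin: "finite S" using assms finite_subset matroid_finite by blast
  define F where "F = {I. I \<subseteq> S \<and> indep I}"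
  have "finite F" unfolding F_def using fin by (simp add: finite_subset[of _ "Pow S"] Collect_mono)
  moreover have "{} \<in> F" unfolding F_def using matroid_indep_empty[OF assms(1)] by simp
  ultimately obtain I where I: "I \<in> F" "card I = Max (card ` F)"
    by (metis (no_types, lifting) Max_in empty_iff finite_imageI image_iff)
  have "J = I" if "indep J" "I \<subseteq> J" "J \<subseteq> S" for J
  proof -
    have "card J \<le> card I" using that I \<open>finite F\<close> unfolding F_def by simp
    then show ?thesis using that(2,3) fin by (metis card_subset_eq finite_subset antisym card_mono)
  qed
  then show thesis using that I unfolding F_def by blast
qed

lemma matroid_basis_exists:
  assumes "matroid E indep"
  obtains B where "basis_of E indep B"
proof -
  obtain I where "indep I" "\<And>J. indep J \<Longrightarrow> I \<subseteq> J \<Longrightarrow> J \<subseteq> E \<Longrightarrow> J = I"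
    using matroid_maximal_indep_subset[OF assms order_refl] by blast
  then have "basis_of E indep I" using matroid_indep_subset[OF assms] by (intro basis_ofI) auto
  then show thesis using that by blast
qed

lemma matroid_transfer:
  assumes "matroid E' indep'" "bij_betw f E E'"
    and iso: "\<And>X. X \<subseteq> E \<Longrightarrow> indep X \<longleftrightarrow> indep' (f ` X)"
    and sub: "\<And>X. indep X \<Longrightarrow> X \<subseteq> E"
  shows "matroid E indep"
proof (rule matroidI)
  have inj: "inj_on f E" using assms(2) bij_betw_def by blast
  show "finite E" using matroid_finite[OF assms(1)] assms(2) bij_betw_finite by blast
  show "\<And>X. indep X \<Longrightarrow> X \<subseteq> E" by (rule sub)
  show "indep {}" using iso[of "{}"] matroid_indep_empty[OF assms(1)] by simp
  show "indep X" if "indep Y" "X \<subseteq> Y" for X Y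
  proof -
    have "Y \<subseteq> E" using sub that by blast
    then have "indep' (f ` Y)" using iso that by blast
    then have "indep' (f ` X)" using matroid_indep_mono[OF assms(1)] that(2) by (meson image_mono)
    then show ?thesis using iso \<open>Y \<subseteq> E\<close> that(2) by (meson order_trans)
  qed
  show "\<exists>y\<in>Y - X. indep (insert y X)" if h: "indep X" "indep Y" "card X < card Y" for X Y
  proof -
    have XE: "X \<subseteq> E" "Y \<subseteq> E" using h sub by auto
    have "card (f ` X) = card X" "card (f ` Y) = card Y"
      using inj XE by (auto intro!: card_image inj_on_subset[OF inj])
    moreover have "indep' (f ` X)" "indep' (f ` Y)" using h XE iso by auto
    ultimately obtain y' where y': "y' \<in> f ` Y - f ` X" "indep' (insert y' (f ` X))"
      using matroid_augment[OF assms(1), of "f ` X" "f ` Y"] h(3) by auto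
    then obtain y where y: "y \<in> Y" "y' = f y" by blast
    then have "y \<notin> X" using y' by blast
    moreover have "indep (insert y X)" using iso[of "insert y X"] XE y y'(2) by auto
    ultimately show ?thesis using y by blast
  qed
qed

lemma basis_of_transfer:
  assumes "bij_betw f E E'"
    and iso: "\<And>X. X \<subseteq> E \<Longrightarrow> indep X \<longleftrightarrow> indep' (f ` X)"
    and sub: "\<And>X. indep X \<Longrightarrow> X \<subseteq> E" and sub': "\<And>X. indep' X \<Longrightarrow> X \<subseteq> E'"
    and "B \<subseteq> E"
  shows "basis_of E indep B \<longleftrightarrow> basis_of E' indep' (f ` B)"
proof -
  have inj: "inj_on f E" using bij_betw_imp_inj_on[OF assms(1)] .
  have im: "f ` E = E'" using bij_betw_imp_surj_on[OF assms(1)] .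
  have preimage: "\<exists>X\<subseteq>E. X' = f ` X" if "indep' X'" for X'
    using sub'[OF that] im subset_image_iff[THEN iffD1] by blast
  have "indep B \<longleftrightarrow> indep' (f ` B)" using iso \<open>B \<subseteq> E\<close> .
  moreover have "(\<forall>X. indep X \<and> B \<subseteq> X \<longrightarrow> X = B) \<longleftrightarrow>
      (\<forall>X'. indep' X' \<and> f ` B \<subseteq> X' \<longrightarrow> X' = f ` B)"
  proof
    assume max: "\<forall>X. indep X \<and> B \<subseteq> X \<longrightarrow> X = B"
    show "\<forall>X'. indep' X' \<and> f ` B \<subseteq> X' \<longrightarrow> X' = f ` B"
    proof (intro allI impI)
      fix X' assume X': "indep' X' \<and> f ` B \<subseteq> X'"
      obtain X where X: "X \<subseteq> E" "X' = f ` X" using preimage[of X'] X' by blast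
      have "indep X" using iso[OF X(1)] X' X(2) by simp
      moreover have "B \<subseteq> X"
      proof
        fix b assume "b \<in> B"
        then have "f b \<in> f ` X" using X' X(2) by blast
        then show "b \<in> X" using inj_on_image_mem_iff[OF inj _ X(1)] \<open>b \<in> B\<close> \<open>B \<subseteq> E\<close> by blast
      qed
      ultimately have "X = B" using max by blast
      then show "X' = f ` B" using X(2) by simp
    qed
  next
    assume max': "\<forall>X'. indep' X' \<and> f ` B \<subseteq> X' \<longrightarrow> X' = f ` B"
    show "\<forall>X. indep X \<and> B \<subseteq> X \<longrightarrow> X = B"
    proof (intro allI impI)
      fix X assume X: "indep X \<and> B \<subseteq> X"
      then have "X \<subseteq> E" using sub by blast
      then have "indep' (f ` X)" using iso X by simp
      moreover have "f ` B \<subseteq> f ` X" using X by (simp add: image_mono)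
      ultimately have "f ` X = f ` B" using max' by blast
      then show "X = B" using inj_on_image_eq_iff[OF inj \<open>X \<subseteq> E\<close> \<open>B \<subseteq> E\<close>] by blast
    qed
  qed
  ultimately show ?thesis unfolding basis_of_def by blast
qed

lemma matroid_iso_dual:
  assumes "matroid_iso E indep E' indep'" "matroid E' (dual_indep E' indep')"
  shows "matroid_iso E (dual_indep E indep) E' (dual_indep E' indep')"
proof -
  obtain f where mE: "matroid E indep" and mE': "matroid E' indep'" and bij: "bij_betw f E E'"
    and iso: "\<And>X. X \<subseteq> E \<Longrightarrow> indep X \<longleftrightarrow> indep' (f ` X)"
    using assms(1) unfolding matroid_iso_def by blast
  have inj: "inj_on f E" and im: "f ` E = E'" using bij by (auto simp: bij_betw_def)
  have basis: "basis_of E indep B \<longleftrightarrow> basis_of E' indep' (f ` B)" if "B \<subseteq> E" for B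
    using bij iso matroid_indep_subset[OF mE] matroid_indep_subset[OF mE'] that
    by (rule basis_of_transfer)
  have dual: "dual_indep E indep X \<longleftrightarrow> dual_indep E' indep' (f ` X)" if "X \<subseteq> E" for X
  proof
    assume "dual_indep E indep X"
    then obtain B where B: "basis_of E indep B" "X \<inter> B = {}" unfolding dual_indep_def by blast
    have "B \<subseteq> E" using matroid_indep_subset[OF mE basis_of_indep[OF B(1)]] .
    have "f ` X \<inter> f ` B = {}" using inj_on_image_Int[OF inj that \<open>B \<subseteq> E\<close>] B(2) by simp
    moreover have "f ` X \<subseteq> E'" using that im by blast
    ultimately show "dual_indep E' indep' (f ` X)"
      unfolding dual_indep_def using basis[OF \<open>B \<subseteq> E\<close>] B(1) by blast
  next
    assume "dual_indep E' indep' (f ` X)"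
    then obtain B' where B': "basis_of E' indep' B'" "f ` X \<inter> B' = {}"
      unfolding dual_indep_def by blast
    have "B' \<subseteq> f ` E" using matroid_indep_subset[OF mE' basis_of_indep[OF B'(1)]] im by simp
    then obtain B where B: "B \<subseteq> E" "B' = f ` B" unfolding subset_image_iff by blast
    have "X \<inter> B = {}" using B'(2) B(2) by blast
    then show "dual_indep E indep X"
      unfolding dual_indep_def using that basis[OF B(1)] B'(1) B(2) by blast
  qed
  have "matroid E (dual_indep E indep)"
    by (rule matroid_transfer[OF assms(2) bij dual]) (auto simp: dual_indep_def)
  moreover have "\<forall>X. X \<subseteq> E \<longrightarrow> (dual_indep E indep X \<longleftrightarrow> dual_indep E' indep' (f ` X))"
    using dual by blast
  ultimately show ?thesis unfolding matroid_iso_def using assms(2) bij by blast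
qed

section \<open>Linear independence of columns\<close>

definition indep_cols :: "(nat \<Rightarrow> nat \<Rightarrow> real) \<Rightarrow> nat set \<Rightarrow> nat set \<Rightarrow> bool" where
  "indep_cols M R S \<longleftrightarrow>
     (\<forall>c. (\<forall>i\<in>R. (\<Sum>j\<in>S. c j * M i j) = 0) \<longrightarrow> (\<forall>j\<in>S. c j = 0))"

lemma indep_cols_cong:
  "(\<And>i j. i \<in> R \<Longrightarrow> j \<in> S \<Longrightarrow> M i j = M' i j) \<Longrightarrow> indep_cols M R S = indep_cols M' R S"
  unfolding indep_cols_def by (simp cong: sum.cong)

lemma indep_cols_rows_mono: "indep_cols M R S \<Longrightarrow> R \<subseteq> R' \<Longrightarrow> indep_cols M R' S"
  unfolding indep_cols_def by blast

lemma homogeneous_system_nonzero_solution: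
  fixes a :: "nat \<Rightarrow> nat \<Rightarrow> real"
  assumes "finite R" "finite V" "card R < card V"
  shows "\<exists>x. (\<exists>v\<in>V. x v \<noteq> 0) \<and> (\<forall>i\<in>R. (\<Sum>v\<in>V. a i v * x v) = 0)"
  using assms
proof (induction R arbitrary: V a rule: finite_induct)
  case empty
  then obtain v where "v \<in> V" by fastforce
  then show ?case by (intro exI[of _ "\<lambda>_. 1"]) auto
next
  case (insert i R)
  show ?case
  proof (cases "\<forall>v\<in>V. a i v = 0")
    case True
    have "card R < card V" using insert.prems insert.hyps by simp
    from insert.IH[OF insert.prems(1) this] obtain x where
      "\<exists>v\<in>V. x v \<noteq> 0" "\<forall>i\<in>R. (\<Sum>v\<in>V. a i v * x v) = 0" by blast
    then show ?thesis using True by (intro exI[of _ x]) auto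
  next
    case False
    then obtain v0 where v0: "v0 \<in> V" "a i v0 \<noteq> 0" by blast
    \<comment> \<open>Gaussian elimination: use equation i to eliminate the unknown v0 from the others.\<close>
    define V' where "V' = V - {v0}"
    define a' where "a' = (\<lambda>r v. a r v - a r v0 * a i v / a i v0)"
    have fV': "finite V'" using insert.prems V'_def by auto
    have cV': "card R < card V'" using insert.prems insert.hyps v0 unfolding V'_def by auto
    from insert.IH[OF fV' cV', of a'] obtain x' where
      x': "\<exists>v\<in>V'. x' v \<noteq> 0" "\<forall>r\<in>R. (\<Sum>v\<in>V'. a' r v * x' v) = 0" by blast
    define x where "x = (\<lambda>v. if v = v0 then - (\<Sum>w\<in>V'. a i w * x' w) / a i v0 else x' v)"
    have Vsplit: "V = insert v0 V'" "v0 \<notin> V'" using v0 V'_def by auto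
    have sumx: "(\<Sum>v\<in>V. b v * x v) = b v0 * x v0 + (\<Sum>v\<in>V'. b v * x' v)" for b
      using Vsplit fV' unfolding x_def by (simp add: sum.insert_if) (intro sum.cong; auto)
    have eqi: "(\<Sum>v\<in>V. a i v * x v) = 0"
      unfolding sumx using v0 by (simp add: x_def)
    have eqr: "(\<Sum>v\<in>V. a r v * x v) = 0" if "r \<in> R" for r
    proof -
      have "(\<Sum>v\<in>V. a r v * x v) = a r v0 * x v0 + (\<Sum>v\<in>V'. a r v * x' v)" by (rule sumx)
      also have "\<dots> = (\<Sum>v\<in>V'. a r v * x' v) - a r v0 / a i v0 * (\<Sum>v\<in>V'. a i v * x' v)"
        using v0 by (simp add: x_def)
      also have "\<dots> = (\<Sum>v\<in>V'. a' r v * x' v)"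
        unfolding a'_def by (simp add: left_diff_distrib sum_subtractf sum_distrib_left mult.assoc)
      finally show ?thesis using x' that by simp
    qed
    have "\<exists>v\<in>V. x v \<noteq> 0" using x' Vsplit unfolding x_def by auto
    then show ?thesis using eqi eqr by (intro exI[of _ x]) auto
  qed
qed

lemma sum_mult_sum_swap:
  "(\<Sum>y\<in>Y. c y * (\<Sum>x\<in>X. d y x * (g x :: 'a :: comm_semiring_0))) = (\<Sum>x\<in>X. (\<Sum>y\<in>Y. d y x * c y) * g x)"
  unfolding sum_distrib_left sum_distrib_right by (subst sum.swap) (simp add: mult_ac)

lemma not_indep_cols_insert_imp_combination:
  assumes "finite X" "indep_cols M R X" "\<not> indep_cols M R (insert y X)" "y \<notin> X"
  obtains d where "\<And>i. i \<in> R \<Longrightarrow> M i y = (\<Sum>x\<in>X. d x * M i x)"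
proof -
  from assms(3) obtain c j where h: "\<forall>i\<in>R. (\<Sum>j\<in>insert y X. c j * M i j) = 0"
    and j: "j \<in> insert y X" "c j \<noteq> 0" unfolding indep_cols_def by blast
  have h2: "\<forall>i\<in>R. c y * M i y + (\<Sum>j\<in>X. c j * M i j) = 0"
    using h assms(1,4) by simp
  have cy: "c y \<noteq> 0"
  proof
    assume "c y = 0"
    then have "\<forall>i\<in>R. (\<Sum>j\<in>X. c j * M i j) = 0" using h2 by simp
    then have "\<forall>j\<in>X. c j = 0" using assms(2) unfolding indep_cols_def by blast
    then show False using j \<open>c y = 0\<close> by auto
  qed
  have "M i y = (\<Sum>x\<in>X. - c x / c y * M i x)" if "i \<in> R" for i
  proof -
    have "M i y = - (\<Sum>j\<in>X. c j * M i j) / c y"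
      using h2 that cy by (simp add: field_simps eq_neg_iff_add_eq_0)
    then show ?thesis by (simp add: sum_divide_distrib sum_negf[symmetric])
  qed
  then show thesis by (rule that)
qed

lemma indep_cols_subset:
  assumes "indep_cols M R Y" "X \<subseteq> Y" "finite Y"
  shows "indep_cols M R X"
  unfolding indep_cols_def
proof (intro allI impI ballI)
  fix c j assume h: "\<forall>i\<in>R. (\<Sum>j\<in>X. c j * M i j) = 0" and j: "j \<in> X"
  define c' where "c' = (\<lambda>j. if j \<in> X then c j else 0)"
  have "(\<Sum>j\<in>Y. c' j * M i j) = (\<Sum>j\<in>X. c j * M i j)" for i
    using assms(2,3) by (subst sum.mono_neutral_right[of Y X]) (auto simp: c'_def)
  then have "\<forall>i\<in>R. (\<Sum>j\<in>Y. c' j * M i j) = 0" using h by simp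
  then have "c' j = 0" using assms(1)[unfolded indep_cols_def, rule_format, of c' j] assms(2) j by blast
  then show "c j = 0" using j by (simp add: c'_def)
qed

lemma indep_cols_augment:
  assumes "indep_cols M R X" "indep_cols M R Y" "card X < card Y" "finite X" "finite Y"
  shows "\<exists>y\<in>Y - X. indep_cols M R (insert y X)"
proof (rule ccontr)
  assume dep: "\<not> ?thesis"
  have "\<forall>y\<in>Y. \<exists>d. \<forall>i\<in>R. M i y = (\<Sum>x\<in>X. d x * M i x)"
  proof
    fix y assume "y \<in> Y"
    show "\<exists>d. \<forall>i\<in>R. M i y = (\<Sum>x\<in>X. d x * M i x)"
    proof (cases "y \<in> X")
      case True
      then show ?thesis using assms(4)
        by (intro exI[of _ "\<lambda>x. if x = y then 1 else 0"]) (simp add: if_distrib[of "\<lambda>a. a * _"] cong: if_cong)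
    next
      case False
      have "\<not> indep_cols M R (insert y X)" using dep \<open>y \<in> Y\<close> False by blast
      then obtain d where "\<And>i. i \<in> R \<Longrightarrow> M i y = (\<Sum>x\<in>X. d x * M i x)"
        using not_indep_cols_insert_imp_combination[OF assms(4,1) _ False] by blast
      then show ?thesis by blast
    qed
  qed
  from bchoice[OF this] obtain D where D: "\<forall>y\<in>Y. \<forall>i\<in>R. M i y = (\<Sum>x\<in>X. D y x * M i x)" ..
  obtain c where c: "\<exists>y\<in>Y. c y \<noteq> 0" "\<forall>x\<in>X. (\<Sum>y\<in>Y. D y x * c y) = 0"
    using homogeneous_system_nonzero_solution[OF assms(4,5,3), of "\<lambda>x y. D y x"] by blast
  have "(\<Sum>y\<in>Y. c y * M i y) = 0" if "i \<in> R" for i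
  proof -
    have "(\<Sum>y\<in>Y. c y * M i y) = (\<Sum>y\<in>Y. c y * (\<Sum>x\<in>X. D y x * M i x))"
      using D that by (intro sum.cong) auto
    also have "\<dots> = (\<Sum>x\<in>X. (\<Sum>y\<in>Y. D y x * c y) * M i x)" by (rule sum_mult_sum_swap)
    also have "\<dots> = 0" using c(2) by simp
    finally show ?thesis .
  qed
  then show False using assms(2)[unfolded indep_cols_def, rule_format, of c] c(1) by blast
qed

lemma indep_cols_card_le:
  assumes "finite R" "finite S" "indep_cols M R S"
  shows "card S \<le> card R"
proof (rule ccontr)
  assume "\<not> ?thesis"
  then have "card R < card S" by simp
  from homogeneous_system_nonzero_solution[OF assms(1,2) this, of M] obtain x
    where x: "\<exists>v\<in>S. x v \<noteq> 0" "\<forall>i\<in>R. (\<Sum>v\<in>S. M i v * x v) = 0" by blast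
  then have "\<forall>i\<in>R. (\<Sum>v\<in>S. x v * M i v) = 0" by (simp add: mult.commute)
  then have "\<forall>v\<in>S. x v = 0" using assms(3) unfolding indep_cols_def by blast
  then show False using x(1) by blast
qed

lemma indep_cols_spanning_rows:
  assumes indep: "indep_cols M R S" and "I \<subseteq> R"
    and span: "\<And>r. r \<in> R \<Longrightarrow> r \<notin> I \<Longrightarrow> \<exists>d. \<forall>j\<in>S. M r j = (\<Sum>i\<in>I. d i * M i j)"
  shows "indep_cols M I S"
  unfolding indep_cols_def
proof (intro allI impI)
  fix c assume c: "\<forall>i\<in>I. (\<Sum>j\<in>S. c j * M i j) = 0"
  have "(\<Sum>j\<in>S. c j * M r j) = 0" if r: "r \<in> R" for r
  proof (cases "r \<in> I")
    case False
    then obtain d where d: "\<forall>j\<in>S. M r j = (\<Sum>i\<in>I. d i * M i j)" using span r by blast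
    have "(\<Sum>j\<in>S. c j * M r j) = (\<Sum>j\<in>S. c j * (\<Sum>i\<in>I. d i * M i j))"
      using d by (intro sum.cong) auto
    also have "\<dots> = (\<Sum>i\<in>I. d i * (\<Sum>j\<in>S. c j * M i j))"
      unfolding sum_distrib_left by (subst sum.swap) (simp add: mult_ac)
    also have "\<dots> = 0" using c by simp
    finally show ?thesis .
  qed (use c in blast)
  then show "\<forall>j\<in>S. c j = 0" using indep unfolding indep_cols_def by blast
qed

lemma matroid_indep_cols: "matroid {..<n} (\<lambda>S. S \<subseteq> {..<n} \<and> indep_cols M R S)"
proof (rule matroidI)
  show "X \<subseteq> {..<n} \<and> indep_cols M R X" if "Y \<subseteq> {..<n} \<and> indep_cols M R Y" "X \<subseteq> Y" for X Y
    using that indep_cols_subset[of M R Y X] finite_subset[of Y "{..<n}"] by auto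
  show "\<exists>y\<in>Y - X. insert y X \<subseteq> {..<n} \<and> indep_cols M R (insert y X)"
    if "X \<subseteq> {..<n} \<and> indep_cols M R X" "Y \<subseteq> {..<n} \<and> indep_cols M R Y" "card X < card Y" for X Y
    using that indep_cols_augment[of M R X Y] finite_subset[of X "{..<n}"] finite_subset[of Y "{..<n}"]
    by auto
qed (auto simp: indep_cols_def)

definition real_entry :: "int mat \<Rightarrow> nat \<Rightarrow> nat \<Rightarrow> real" where
  "real_entry A i j = real_of_int (A $$ (i, j))"

lemma col_indep_iff_indep_cols:
  "col_indep A S \<longleftrightarrow> S \<subseteq> {..<dim_col A} \<and> indep_cols (real_entry A) {..<dim_row A} S"
  unfolding col_indep_def indep_cols_def real_entry_def by (simp only: Ball_def lessThan_iff)

lemma matroid_col_indep: "matroid {..<dim_col A} (col_indep A)"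
  using matroid_indep_cols[of "dim_col A" "real_entry A" "{..<dim_row A}"]
  by (simp add: col_indep_iff_indep_cols[abs_def])

section \<open>Minors indexed by sets of rows and columns\<close>

definition minor_mat :: "(nat \<Rightarrow> nat \<Rightarrow> 'a) \<Rightarrow> nat set \<Rightarrow> nat set \<Rightarrow> 'a mat" where
  "minor_mat f R C = mat (card R) (card C) (\<lambda>(a,b). f (pick R a) (pick C b))"

definition minor :: "(nat \<Rightarrow> nat \<Rightarrow> 'a :: comm_ring_1) \<Rightarrow> nat set \<Rightarrow> nat set \<Rightarrow> 'a" where
  "minor f R C = det (minor_mat f R C)"

lemma minor_mat_carrier: "minor_mat f R C \<in> carrier_mat (card R) (card C)"
  unfolding minor_mat_def by simp

lemma minor_mat_index: "a < card R \<Longrightarrow> b < card C \<Longrightarrow> minor_mat f R C $$ (a,b) = f (pick R a) (pick C b)"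
  unfolding minor_mat_def by simp

lemma minor_mat_cong:
  "(\<And>i j. i \<in> R \<Longrightarrow> j \<in> C \<Longrightarrow> f i j = g i j) \<Longrightarrow> minor_mat f R C = minor_mat g R C"
  by (rule eq_matI) (auto simp: minor_mat_def pick_in_set_le)

lemma minor_cong:
  "(\<And>i j. i \<in> R \<Longrightarrow> j \<in> C \<Longrightarrow> f i j = g i j) \<Longrightarrow> minor f R C = minor g R C"
  unfolding minor_def using minor_mat_cong by metis

lemma pick_inj: "inj_on (pick S) {..<card S}"
proof (rule inj_onI)
  fix x y assume "x \<in> {..<card S}" "y \<in> {..<card S}" "pick S x = pick S y"
  then show "x = y" using pick_mono[of _ S] by (metis lessThan_iff linorder_neqE_nat less_irrefl)
qed

lemma pick_image: "finite S \<Longrightarrow> pick S ` {..<card S} = S"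
proof -
  assume f: "finite S"
  have sub: "pick S ` {..<card S} \<subseteq> S" using pick_in_set_le by blast
  have "card (pick S ` {..<card S}) = card S" using card_image[OF pick_inj] by simp
  then show ?thesis using card_subset_eq[OF f sub] by blast
qed

lemma sum_pick: "finite S \<Longrightarrow> (\<Sum>k<card S. g (pick S k)) = (\<Sum>s\<in>S. g s)"
proof -
  assume f: "finite S"
  have "(\<Sum>s\<in>S. g s) = (\<Sum>s\<in>pick S ` {..<card S}. g s)" using pick_image[OF f] by simp
  also have "\<dots> = (\<Sum>k<card S. g (pick S k))" using sum.reindex[OF pick_inj] by simp
  finally show ?thesis by simp
qed

lemma pick_index_less: "finite S \<Longrightarrow> (r::nat) \<in> S \<Longrightarrow> card {x\<in>S. x < r} < card S"
proof -
  assume a: "finite S" "r \<in> S"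
  have "{x\<in>S. x < r} \<subseteq> S - {r}" by auto
  then have "card {x\<in>S. x < r} \<le> card (S - {r})" using a by (intro card_mono) auto
  also have "\<dots> < card S" using a card_gt_0_iff[of S] by auto
  finally show ?thesis .
qed

lemma pick_eq_iff: "a < card S \<Longrightarrow> b < card S \<Longrightarrow> pick S a = pick S b \<longleftrightarrow> a = b"
  using pick_inj[of S] unfolding inj_on_def by auto

lemma pick_less_iff: "a < card S \<Longrightarrow> b < card S \<Longrightarrow> pick S a < pick S b \<longleftrightarrow> a < b"
  by (metis pick_mono linorder_neqE_nat less_imp_not_less less_irrefl)

lemma submatrix_eq_minor_mat:
  assumes "R \<subseteq> {..<dim_row A}" "C \<subseteq> {..<dim_col A}"
  shows "submatrix A R C = minor_mat (\<lambda>i j. A $$ (i,j)) R C"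
proof -
  have "{i. i < dim_row A \<and> i \<in> R} = R" "{j. j < dim_col A \<and> j \<in> C} = C" using assms by auto
  then show ?thesis unfolding submatrix_def minor_mat_def by simp
qed

lemma pick_delete:
  assumes f: "finite R" and i0: "i0 < card R" and a: "a < card R - 1"
  shows "pick (R - {pick R i0}) a = pick R (if a < i0 then a else Suc a)"
proof -
  define a' where "a' = (if a < i0 then a else Suc a)"
  have a': "a' < card R" "a' \<noteq> i0" using a i0 by (auto simp: a'_def)
  define x where "x = pick R a'"
  define r0 where "r0 = pick R i0"
  have xR: "x \<in> R" unfolding x_def using pick_in_set_le[OF a'(1)] .
  have ne: "x \<noteq> r0" unfolding x_def r0_def using pick_eq_iff[OF a'(1) i0] a'(2) by simp
  have cx: "card {y\<in>R. y < x} = a'" unfolding x_def using card_pick a'(1) by blast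
  have "card {y \<in> R - {r0}. y < x} = a"
  proof (cases "a < i0")
    case True
    then have "x < r0" unfolding x_def r0_def a'_def using pick_less_iff[OF _ i0] a' True
      by (simp add: a'_def)
    then have "{y \<in> R - {r0}. y < x} = {y\<in>R. y < x}" by auto
    then show ?thesis using cx True by (simp add: a'_def)
  next
    case False
    then have "r0 < x" unfolding x_def r0_def using pick_less_iff[OF i0 a'(1)] by (simp add: a'_def)
    then have e: "{y \<in> R - {r0}. y < x} = {y\<in>R. y < x} - {r0}" by auto
    have "r0 \<in> {y\<in>R. y < x}" using \<open>r0 < x\<close> pick_in_set_le[OF i0] r0_def by auto
    then have "card {y \<in> R - {r0}. y < x} = a' - 1" unfolding e using cx f by simp
    then show ?thesis using False by (simp add: a'_def)
  qed
  then have "pick (R - {r0}) a = x" using pick_card_in_set[of x "R - {r0}"] xR ne by simp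
  then show ?thesis unfolding x_def r0_def a'_def .
qed

lemma mat_delete_minor_mat:
  assumes f: "finite R" "finite C" and i0: "i0 < card R" and j0: "j0 < card C"
  shows "mat_delete (minor_mat f R C) i0 j0 = minor_mat f (R - {pick R i0}) (C - {pick C j0})"
proof -
  have cR: "card (R - {pick R i0}) = card R - 1" using pick_in_set_le[OF i0] f by simp
  have cC: "card (C - {pick C j0}) = card C - 1" using pick_in_set_le[OF j0] f by simp
  show ?thesis
  proof (rule eq_matI)
    show "dim_row (mat_delete (minor_mat f R C) i0 j0) = dim_row (minor_mat f (R - {pick R i0}) (C - {pick C j0}))"
      using cR by (simp add: minor_mat_def)
    show "dim_col (mat_delete (minor_mat f R C) i0 j0) = dim_col (minor_mat f (R - {pick R i0}) (C - {pick C j0}))"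
      using cC by (simp add: minor_mat_def)
    fix i j assume i: "i < dim_row (minor_mat f (R - {pick R i0}) (C - {pick C j0}))"
      and j: "j < dim_col (minor_mat f (R - {pick R i0}) (C - {pick C j0}))"
    have i': "i < card R - 1" "j < card C - 1" using i j cR cC by (simp_all add: minor_mat_def)
    have "mat_delete (minor_mat f R C) i0 j0 $$ (i, j) =
      f (pick R (if i < i0 then i else Suc i)) (pick C (if j < j0 then j else Suc j))"
      unfolding mat_delete_def using i' by (simp add: minor_mat_def)
    also have "\<dots> = f (pick (R - {pick R i0}) i) (pick (C - {pick C j0}) j)"
      using pick_delete[OF f(1) i0 i'(1)] pick_delete[OF f(2) j0 i'(2)] by simp
    also have "\<dots> = minor_mat f (R - {pick R i0}) (C - {pick C j0}) $$ (i, j)"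
      using i j by (simp add: minor_mat_def)
    finally show "mat_delete (minor_mat f R C) i0 j0 $$ (i, j) = minor_mat f (R - {pick R i0}) (C - {pick C j0}) $$ (i, j)" .
  qed
qed

lemma minor_unit_col:
  fixes f :: "nat \<Rightarrow> nat \<Rightarrow> 'a :: linordered_idom"
  assumes f: "finite R" "finite C" and cRC: "card R = card C" and r0: "r0 \<in> R" and c0: "c0 \<in> C"
    and unit: "\<And>i. i \<in> R \<Longrightarrow> f i c0 = (if i = r0 then 1 else 0)"
  shows "\<bar>minor f R C\<bar> = \<bar>minor f (R - {r0}) (C - {c0})\<bar>"
proof -
  define k where "k = card R"
  define i0 where "i0 = card {x\<in>R. x < r0}"
  define j0 where "j0 = card {x\<in>C. x < c0}"
  have i0: "i0 < k" "pick R i0 = r0" unfolding i0_def k_def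
    using pick_index_less[OF f(1) r0] pick_card_in_set[OF r0] by auto
  have j0: "j0 < k" "pick C j0 = c0" unfolding j0_def k_def
    using pick_index_less[OF f(2) c0] pick_card_in_set[OF c0] cRC by auto
  define M where "M = minor_mat f R C"
  have M: "M \<in> carrier_mat k k" unfolding M_def k_def using minor_mat_carrier cRC by metis
  have "det M = (\<Sum>i<k. M $$ (i,j0) * cofactor M i j0)"
    by (rule laplace_expansion_column[OF M j0(1)])
  also have "\<dots> = (\<Sum>i<k. (if i = i0 then cofactor M i j0 else 0))"
  proof (rule sum.cong[OF refl])
    fix i assume "i \<in> {..<k}"
    then have i: "i < k" by simp
    have "M $$ (i,j0) = f (pick R i) c0" unfolding M_def using i j0 cRC minor_mat_index[of i R j0 C f] k_def by simp
    also have "\<dots> = (if pick R i = r0 then 1 else 0)" using unit pick_in_set_le i k_def by simp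
    also have "\<dots> = (if i = i0 then 1 else 0)" using pick_eq_iff[of i R i0] i i0 k_def by auto
    finally show "M $$ (i,j0) * cofactor M i j0 = (if i = i0 then cofactor M i j0 else 0)" by simp
  qed
  also have "\<dots> = cofactor M i0 j0" using i0 by simp
  finally have "det M = (-1)^(i0+j0) * det (mat_delete M i0 j0)" unfolding cofactor_def .
  then have "\<bar>det M\<bar> = \<bar>det (mat_delete M i0 j0)\<bar>" by (simp add: abs_mult)
  moreover have "mat_delete M i0 j0 = minor_mat f (R - {r0}) (C - {c0})"
    unfolding M_def using mat_delete_minor_mat[OF f, of i0 j0] i0 j0 cRC k_def by simp
  ultimately show ?thesis unfolding minor_def M_def by simp
qed

lemma minor_zero_col:
  assumes f: "finite R" "finite C" and cRC: "card R = card C" and c0: "c0 \<in> C"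
    and z: "\<And>i. i \<in> R \<Longrightarrow> f i c0 = 0"
  shows "minor f R C = 0"
proof -
  define k where "k = card R"
  define j0 where "j0 = card {x\<in>C. x < c0}"
  have j0: "j0 < k" "pick C j0 = c0" unfolding j0_def k_def
    using pick_index_less[OF f(2) c0] pick_card_in_set[OF c0] cRC by auto
  define M where "M = minor_mat f R C"
  have M: "M \<in> carrier_mat k k" unfolding M_def k_def using minor_mat_carrier cRC by metis
  have "det M = (\<Sum>i<k. M $$ (i,j0) * cofactor M i j0)"
    by (rule laplace_expansion_column[OF M j0(1)])
  also have "\<dots> = 0"
  proof (rule sum.neutral, rule ballI)
    fix i assume "i \<in> {..<k}"
    then have i: "i < k" by simp
    have "M $$ (i,j0) = f (pick R i) c0" unfolding M_def using i j0 cRC minor_mat_index[of i R j0 C f] k_def by simp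
    also have "\<dots> = 0" using z pick_in_set_le i k_def by simp
    finally show "M $$ (i,j0) * cofactor M i j0 = 0" by simp
  qed
  finally show ?thesis unfolding minor_def M_def .
qed

lemma minor_unit_cols:
  fixes f :: "nat \<Rightarrow> nat \<Rightarrow> 'a :: linordered_idom"
  assumes "finite L"
  shows "finite R \<Longrightarrow> finite C \<Longrightarrow> card R = card C \<Longrightarrow> L \<subseteq> C \<Longrightarrow> L \<subseteq> R \<Longrightarrow>
    (\<And>l i. l \<in> L \<Longrightarrow> i \<in> R \<Longrightarrow> f i l = (if i = l then 1 else 0)) \<Longrightarrow>
    \<bar>minor f R C\<bar> = \<bar>minor f (R - L) (C - L)\<bar>"
  using assms
proof (induction L arbitrary: R C rule: finite_induct)
  case (insert l L)
  have l: "l \<in> C" "l \<in> R" using insert.prems by auto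
  have "\<bar>minor f R C\<bar> = \<bar>minor f (R - {l}) (C - {l})\<bar>"
    by (rule minor_unit_col[OF insert.prems(1,2,3) l(2) l(1)]) (use insert.prems(6) in auto)
  also have "\<dots> = \<bar>minor f (R - {l} - L) (C - {l} - L)\<bar>"
  proof (rule insert.IH)
    show "finite (R - {l})" "finite (C - {l})" using insert.prems by auto
    show "card (R - {l}) = card (C - {l})" using insert.prems l by simp
    show "L \<subseteq> C - {l}" "L \<subseteq> R - {l}" using insert.prems insert.hyps by auto
    show "\<And>l' i. l' \<in> L \<Longrightarrow> i \<in> R - {l} \<Longrightarrow> f i l' = (if i = l' then 1 else 0)"
      using insert.prems(6) by simp
  qed
  also have "\<dots> = \<bar>minor f (R - insert l L) (C - insert l L)\<bar>"
    by (simp only: Diff_insert2[symmetric])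
  finally show ?case .
qed simp

lemma minor_mult:
  fixes f h :: "nat \<Rightarrow> nat \<Rightarrow> 'a :: comm_ring_1"
  assumes fin: "finite R" "finite B" "finite C" and c: "card R = card B" "card B = card C"
    and g: "\<And>i j. i \<in> R \<Longrightarrow> j \<in> C \<Longrightarrow> g i j = (\<Sum>b\<in>B. f i b * h b j)"
  shows "minor g R C = minor f R B * minor h B C"
proof -
  have "minor_mat g R C = minor_mat f R B * minor_mat h B C"
  proof (rule eq_matI)
    fix i j assume i: "i < dim_row (minor_mat f R B * minor_mat h B C)" and j: "j < dim_col (minor_mat f R B * minor_mat h B C)"
    then have i': "i < card R" and j': "j < card C" by (simp_all add: minor_mat_def)
    have "(minor_mat f R B * minor_mat h B C) $$ (i,j) = (\<Sum>k<card B. f (pick R i) (pick B k) * h (pick B k) (pick C j))"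
      using i' j' by (simp add: minor_mat_def scalar_prod_def lessThan_atLeast0)
    also have "\<dots> = (\<Sum>b\<in>B. f (pick R i) b * h b (pick C j))"
      by (rule sum_pick[OF fin(2)])
    also have "\<dots> = g (pick R i) (pick C j)" using g pick_in_set_le fin i' j' by metis
    also have "\<dots> = minor_mat g R C $$ (i,j)" using i' j' by (simp add: minor_mat_def)
    finally show "minor_mat g R C $$ (i, j) = (minor_mat f R B * minor_mat h B C) $$ (i, j)" by simp
  qed (simp_all add: minor_mat_def)
  moreover have "minor_mat f R B \<in> carrier_mat (card R) (card R)" "minor_mat h B C \<in> carrier_mat (card R) (card R)"
    using minor_mat_carrier[of f R B] minor_mat_carrier[of h B C] c by simp_all
  ultimately show ?thesis unfolding minor_def using det_mult by metis
qed

lemma minor_transpose: "card R = card C \<Longrightarrow> minor f R C = minor (\<lambda>i j. f j i) C R"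
proof -
  assume c: "card R = card C"
  have "transpose_mat (minor_mat f R C) = minor_mat (\<lambda>i j. f j i) C R"
    by (rule eq_matI) (auto simp: minor_mat_def)
  then show ?thesis unfolding minor_def using det_transpose[of "minor_mat f R C" "card R"] minor_mat_carrier c
    by metis
qed

lemma minor_uminus: "card R = card C \<Longrightarrow> \<bar>minor (\<lambda>i j. - f i j) R C\<bar> = \<bar>minor f R C :: 'a :: linordered_idom\<bar>"
proof -
  assume c: "card R = card C"
  have "minor_mat (\<lambda>i j. - f i j) R C = (-1) \<cdot>\<^sub>m minor_mat f R C"
    by (rule eq_matI) (auto simp: minor_mat_def)
  then show ?thesis unfolding minor_def by (simp add: abs_mult minor_mat_def)
qed

lemma of_int_minor: "real_of_int (minor f R C) = minor (\<lambda>i j. real_of_int (f i j)) R C"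
proof -
  have "map_mat real_of_int (minor_mat f R C) = minor_mat (\<lambda>i j. real_of_int (f i j)) R C"
    by (rule eq_matI) (auto simp: minor_mat_def)
  then show ?thesis unfolding minor_def by (metis of_int_hom.hom_det)
qed

lemma pick_comp:
  assumes I: "I \<subseteq> {..<card N}" and x: "x < card I"
  shows "pick (pick N ` I) x = pick N (pick I x)"
proof -
  define y where "y = pick I x"
  have yI: "y \<in> I" unfolding y_def using pick_in_set_le[OF x] .
  have yN: "y < card N" using yI I by auto
  have inj: "inj_on (pick N) I" using pick_inj I inj_on_subset by blast
  have "{w \<in> pick N ` I. w < pick N y} = pick N ` {v\<in>I. v < y}"
  proof (rule equalityI; rule subsetI)
    fix w assume "w \<in> {w \<in> pick N ` I. w < pick N y}"
    then obtain v where v: "v \<in> I" "w = pick N v" "pick N v < pick N y" by auto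
    then have "v < y" using pick_less_iff I yN by auto
    then show "w \<in> pick N ` {v\<in>I. v < y}" using v by auto
  next
    fix w assume "w \<in> pick N ` {v\<in>I. v < y}"
    then obtain v where v: "v \<in> I" "w = pick N v" "v < y" by auto
    then have "pick N v < pick N y" using pick_less_iff I yN by auto
    then show "w \<in> {w \<in> pick N ` I. w < pick N y}" using v by auto
  qed
  then have "card {w \<in> pick N ` I. w < pick N y} = card {v\<in>I. v < y}"
    using card_image[OF inj_on_subset[OF inj]] by auto
  also have "\<dots> = x" unfolding y_def using card_pick x by blast
  finally have "card {w \<in> pick N ` I. w < pick N y} = x" .
  then show ?thesis using pick_card_in_set[of "pick N y" "pick N ` I"] yI unfolding y_def by auto
qed

lemma minor_pick_rows:
  assumes I: "I \<subseteq> {..<card N}"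
  shows "minor (\<lambda>a j. f (pick N a) j) I J = minor f (pick N ` I) J"
proof -
  have inj: "inj_on (pick N) I" using pick_inj I inj_on_subset by blast
  have c: "card (pick N ` I) = card I" using card_image[OF inj] .
  have "minor_mat (\<lambda>a j. f (pick N a) j) I J = minor_mat f (pick N ` I) J"
    by (rule eq_matI) (auto simp: minor_mat_def c pick_comp[OF I])
  then show ?thesis unfolding minor_def by simp
qed

lemma indep_cols_pick_rows:
  assumes N: "finite N"
  shows "indep_cols (\<lambda>a j. f (pick N a) j) {..<card N} X = indep_cols f N X"
proof -
  have "(\<forall>a\<in>{..<card N}. P (pick N a)) \<longleftrightarrow> (\<forall>k\<in>N. P k)" for P
  proof -
    have "(\<forall>a\<in>{..<card N}. P (pick N a)) \<longleftrightarrow> (\<forall>k\<in>pick N ` {..<card N}. P k)" by simp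
    then show ?thesis using pick_image[OF N] by simp
  qed
  note key = this
  show ?thesis unfolding indep_cols_def
  proof (intro iff_allI)
    fix c
    show "((\<forall>i\<in>{..<card N}. (\<Sum>j\<in>X. c j * f (pick N i) j) = 0) \<longrightarrow> (\<forall>j\<in>X. c j = 0)) =
      ((\<forall>i\<in>N. (\<Sum>j\<in>X. c j * f i j) = 0) \<longrightarrow> (\<forall>j\<in>X. c j = 0))"
      using key[of "\<lambda>i. (\<Sum>j\<in>X. c j * f i j) = 0"] by simp
  qed
qed

lemma minor_singleton: "minor f {b} {j} = f b j"
proof -
  have "minor_mat f {b} {j} \<in> carrier_mat 1 1" using minor_mat_carrier[of f "{b}" "{j}"] by simp
  then have "det (minor_mat f {b} {j}) = minor_mat f {b} {j} $$ (0,0)" by (rule det_single)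
  also have "\<dots> = f (pick {b} 0) (pick {j} 0)" by (simp add: minor_mat_def)
  finally have e: "det (minor_mat f {b} {j}) = f (pick {b} 0) (pick {j} 0)" .
  have "pick {b} 0 = b" "pick {j} 0 = j" by (auto intro: Least_equality)
  then show ?thesis using e unfolding minor_def by simp
qed

section \<open>Minors, independence and rank\<close>

lemma minor_nonzero_imp_indep_cols:
  fixes g :: "nat \<Rightarrow> nat \<Rightarrow> real"
  assumes f: "finite R" "finite C" and c: "card R = card C" and nz: "minor g R C \<noteq> 0"
  shows "indep_cols g R C"
proof (rule ccontr)
  assume "\<not> indep_cols g R C"
  then obtain cf where h: "\<forall>i\<in>R. (\<Sum>j\<in>C. cf j * g i j) = 0" and j: "\<exists>j\<in>C. cf j \<noteq> 0"
    unfolding indep_cols_def by blast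
  define k where "k = card R"
  define v where "v = vec k (\<lambda>\<beta>. cf (pick C \<beta>))"
  define M where "M = minor_mat g R C"
  have M: "M \<in> carrier_mat k k" unfolding M_def k_def using minor_mat_carrier c by metis
  have vc: "v \<in> carrier_vec k" unfolding v_def by simp
  have vnz: "v \<noteq> 0\<^sub>v k"
  proof
    assume v0: "v = 0\<^sub>v k"
    from j obtain j where jC: "j \<in> C" "cf j \<noteq> 0" by blast
    define \<beta> where "\<beta> = card {x\<in>C. x < j}"
    have \<beta>: "\<beta> < k" "pick C \<beta> = j" unfolding \<beta>_def k_def
      using pick_index_less[OF f(2) jC(1)] pick_card_in_set[OF jC(1)] c by auto
    have "v $ \<beta> = cf j" unfolding v_def using \<beta> by simp
    then show False using v0 \<beta> jC by simp
  qed
  have "M *\<^sub>v v = 0\<^sub>v k"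
  proof (rule eq_vecI)
    show "dim_vec (M *\<^sub>v v) = dim_vec (0\<^sub>v k)" using M by simp
    fix \<alpha> assume "\<alpha> < dim_vec (0\<^sub>v k)"
    then have \<alpha>: "\<alpha> < k" by simp
    have "(M *\<^sub>v v) $ \<alpha> = (\<Sum>\<beta><k. g (pick R \<alpha>) (pick C \<beta>) * cf (pick C \<beta>))"
      using \<alpha> M c unfolding M_def v_def k_def
      by (simp add: minor_mat_def scalar_prod_def lessThan_atLeast0)
    also have "\<dots> = (\<Sum>j\<in>C. g (pick R \<alpha>) j * cf j)"
      unfolding k_def c by (rule sum_pick[OF f(2)])
    also have "\<dots> = 0" using h pick_in_set_le \<alpha> k_def by (simp add: mult.commute)
    finally show "(M *\<^sub>v v) $ \<alpha> = 0\<^sub>v k $ \<alpha>" using \<alpha> by simp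
  qed
  then have "det M = 0" using det_0_iff_vec_prod_zero_field[OF M] vc vnz by blast
  then show False using nz unfolding minor_def M_def by simp
qed

lemma minor_zero_imp_not_indep_cols:
  fixes g :: "nat \<Rightarrow> nat \<Rightarrow> real"
  assumes f: "finite R" "finite C" and c: "card R = card C" and z: "minor g R C = 0"
  shows "\<not> indep_cols g R C"
proof
  assume ri: "indep_cols g R C"
  define k where "k = card R"
  define M where "M = minor_mat g R C"
  have M: "M \<in> carrier_mat k k" unfolding M_def k_def using minor_mat_carrier c by metis
  obtain v where v: "v \<in> carrier_vec k" "v \<noteq> 0\<^sub>v k" "M *\<^sub>v v = 0\<^sub>v k"
    using det_0_iff_vec_prod_zero_field[OF M] z unfolding minor_def M_def by blast
  define cf where "cf = (\<lambda>j. v $ card {x\<in>C. x < j})"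
  have cfp: "cf (pick C \<beta>) = v $ \<beta>" if "\<beta> < k" for \<beta>
    unfolding cf_def using card_pick[of \<beta> C] that c k_def by simp
  have "\<forall>i\<in>R. (\<Sum>j\<in>C. cf j * g i j) = 0"
  proof
    fix i assume iR: "i \<in> R"
    define \<alpha> where "\<alpha> = card {x\<in>R. x < i}"
    have \<alpha>: "\<alpha> < k" "pick R \<alpha> = i" unfolding \<alpha>_def k_def
      using pick_index_less[OF f(1) iR] pick_card_in_set[OF iR] by auto
    have "(\<Sum>j\<in>C. cf j * g i j) = (\<Sum>\<beta><k. cf (pick C \<beta>) * g i (pick C \<beta>))"
      unfolding k_def c by (rule sum_pick[OF f(2), symmetric])
    also have "\<dots> = (\<Sum>\<beta><k. M $$ (\<alpha>, \<beta>) * v $ \<beta>)"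
      by (rule sum.cong[OF refl]) (use \<alpha> cfp c k_def in \<open>simp add: M_def minor_mat_def\<close>)
    also have "\<dots> = (M *\<^sub>v v) $ \<alpha>"
      using \<alpha> M v(1) by (simp add: scalar_prod_def lessThan_atLeast0 mult.commute)
    also have "\<dots> = 0" using v(3) \<alpha> by simp
    finally show "(\<Sum>j\<in>C. cf j * g i j) = 0" .
  qed
  then have all0: "\<forall>j\<in>C. cf j = 0" using ri unfolding indep_cols_def by blast
  have "v = 0\<^sub>v k"
  proof (rule eq_vecI)
    fix \<beta> assume "\<beta> < dim_vec (0\<^sub>v k)"
    then have \<beta>: "\<beta> < k" by simp
    have "pick C \<beta> \<in> C" using pick_in_set_le \<beta> c k_def by simp
    then show "v $ \<beta> = 0\<^sub>v k $ \<beta>" using all0 cfp[OF \<beta>] \<beta> by simp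
  qed (use v(1) in simp)
  then show False using v(2) by simp
qed

lemma minor_nonzero_iff_indep_cols:
  fixes g :: "nat \<Rightarrow> nat \<Rightarrow> real"
  assumes f: "finite R" "finite C" and c: "card R = card C"
  shows "minor g R C \<noteq> 0 \<longleftrightarrow> indep_cols g R C"
  using minor_nonzero_imp_indep_cols[OF f c] minor_zero_imp_not_indep_cols[OF f c] by blast

lemma indep_cols_obtain_nonzero_minor:
  assumes B: "finite B" "indep_cols M {..<m} B"
  obtains I where "I \<subseteq> {..<m}" "card I = card B" "minor M I B \<noteq> 0"
proof -
  define M' where "M' = (\<lambda>b i. M i b)"
  have "matroid {..<m} (\<lambda>S. S \<subseteq> {..<m} \<and> indep_cols M' B S)" by (rule matroid_indep_cols)
  from matroid_maximal_indep_subset[OF this order_refl]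
  obtain I where Isub: "I \<subseteq> {..<m}" and "I \<subseteq> {..<m} \<and> indep_cols M' B I"
    and max: "\<And>J. J \<subseteq> {..<m} \<and> indep_cols M' B J \<Longrightarrow> I \<subseteq> J \<Longrightarrow> J \<subseteq> {..<m} \<Longrightarrow> J = I"
    by metis
  then have I: "indep_cols M' B I" by simp
  have fI: "finite I" using Isub by (rule finite_subset) simp
  have "indep_cols M I B"
  proof (rule indep_cols_spanning_rows[OF B(2) Isub])
    fix r assume r: "r \<in> {..<m}" "r \<notin> I"
    then have "\<not> indep_cols M' B (insert r I)" using max[of "insert r I"] Isub by blast
    from not_indep_cols_insert_imp_combination[OF fI I this r(2)]
    obtain d where "\<And>b. b \<in> B \<Longrightarrow> M' b r = (\<Sum>i\<in>I. d i * M' b i)" by blast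
    then show "\<exists>d. \<forall>b\<in>B. M r b = (\<Sum>i\<in>I. d i * M i b)" unfolding M'_def by blast
  qed
  then have card: "card I = card B"
    using indep_cols_card_le[OF fI B(1)] indep_cols_card_le[OF B(1) fI I] by simp
  have "minor M I B = minor M' B I" unfolding M'_def by (rule minor_transpose[OF card])
  moreover have "minor M' B I \<noteq> 0" using minor_nonzero_iff_indep_cols[OF B(1) fI] card I by simp
  ultimately show thesis using that Isub card by simp
qed

lemma of_int_det_submatrix:
  assumes "I \<subseteq> {..<dim_row A}" "J \<subseteq> {..<dim_col A}"
  shows "real_of_int (det (submatrix A I J)) = minor (real_entry A) I J"
  using assms unfolding real_entry_def
  by (simp add: submatrix_eq_minor_mat of_int_minor flip: minor_def)

lemma card_le_int_rank_if_minor_nonzero: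
  assumes I: "I \<subseteq> {..<dim_row A}" and J: "J \<subseteq> {..<dim_col A}"
    and nz: "minor (real_entry A) I J \<noteq> 0"
  shows "card J \<le> int_rank A"
proof -
  define Ar where "Ar = map_mat real_of_int A"
  have Ar: "Ar \<in> carrier_mat (dim_row A) (dim_col A)" unfolding Ar_def by simp
  have "submatrix Ar I J = minor_mat (\<lambda>i j. Ar $$ (i,j)) I J"
    using I J Ar by (intro submatrix_eq_minor_mat) auto
  also have "\<dots> = minor_mat (real_entry A) I J"
    using I J by (intro minor_mat_cong) (auto simp: Ar_def real_entry_def subset_eq)
  finally have "det (submatrix Ar I J) \<noteq> 0" using nz unfolding minor_def by simp
  from vec_space.rank_gt_minor[OF Ar this] have "card {j. j < dim_col A \<and> j \<in> J} \<le> int_rank A"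
    unfolding int_rank_def Ar_def by simp
  moreover have "{j. j < dim_col A \<and> j \<in> J} = J" using J by auto
  ultimately show ?thesis by simp
qed

lemma rank_le_if_indep_cols_card_le:
  fixes A :: "real mat" and r :: nat
  assumes A: "A \<in> carrier_mat n nc"
    and bound: "\<And>J. J \<subseteq> {..<nc} \<Longrightarrow> indep_cols (\<lambda>i j. A $$ (i,j)) {..<n} J \<Longrightarrow> card J \<le> r"
  shows "vec_space.rank n A \<le> r"
proof -
  interpret vs: vec_space "TYPE(real)" n .
  obtain S where S: "maximal S (\<lambda>T. T \<subseteq> set (cols A) \<and> vs.lin_indpt T)"
    using maximal_exists[of "(\<lambda>T. T \<subseteq> set (cols A) \<and> vs.lin_indpt T)" "card (set (cols A))" "{}"]
    by (meson List.finite_set card_mono empty_iff empty_subsetI vs.finite_lin_indpt2 rev_finite_subset)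
  have rank: "vs.rank A = card S" using vs.rank_card_indpt[OF A S] .
  have SC: "S \<subseteq> set (cols A)" "vs.lin_indpt S" using S unfolding maximal_def by auto
  have Scar: "S \<subseteq> carrier_vec n" using SC(1) A cols_dim by blast
  have "\<forall>v\<in>S. \<exists>j. j < nc \<and> col A j = v"
  proof
    fix v assume "v \<in> S"
    then obtain j where "j < length (cols A)" "cols A ! j = v"
      using SC(1) by (metis in_set_conv_nth subsetD)
    then show "\<exists>j. j < nc \<and> col A j = v" using A by auto
  qed
  from bchoice[OF this] obtain idx where idx: "\<And>v. v \<in> S \<Longrightarrow> idx v < nc \<and> col A (idx v) = v"
    by blast
  have entry: "v $ i = A $$ (i, idx v)" if "v \<in> S" "i < n" for v i
    using idx[OF that(1)] that(2) A by (metis carrier_matD index_col)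
  have inj: "inj_on idx S" by (rule inj_onI) (metis idx)
  define J where "J = idx ` S"
  have "indep_cols (\<lambda>i j. A $$ (i,j)) {..<n} J"
    unfolding indep_cols_def
  proof (intro allI impI ballI)
    fix c j assume h: "\<forall>i\<in>{..<n}. (\<Sum>j\<in>J. c j * A $$ (i, j)) = 0" and "j \<in> J"
    then obtain v0 where v0: "v0 \<in> S" "j = idx v0" unfolding J_def by blast
    have "vs.lincomb (c \<circ> idx) S = 0\<^sub>v n"
    proof (rule eq_vecI)
      fix i assume "i < dim_vec (0\<^sub>v n)"
      then have i: "i < n" by simp
      have "vs.lincomb (c \<circ> idx) S $ i = (\<Sum>v\<in>S. c (idx v) * A $$ (i, idx v))"
        using vs.lincomb_index[OF i Scar] entry i by (auto intro!: sum.cong)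
      also have "\<dots> = (\<Sum>j\<in>J. c j * A $$ (i, j))"
        unfolding J_def using sum.reindex[OF inj, of "\<lambda>j. c j * A $$ (i, j)"] by simp
      finally show "vs.lincomb (c \<circ> idx) S $ i = 0\<^sub>v n $ i" using h i by simp
    qed (use vs.lincomb_closed[OF Scar] in simp)
    then show "c j = 0"
      using SC(2) finite_subset[OF SC(1)] v0 unfolding vs.lin_dep_def by fastforce
  qed
  moreover have "J \<subseteq> {..<nc}" unfolding J_def using idx by auto
  ultimately have "card J \<le> r" using bound by blast
  then show ?thesis using rank card_image[OF inj] unfolding J_def by simp
qed

lemma basis_of_card_eq_int_rank:
  assumes B: "basis_of {..<dim_col A} (col_indep A) B"
  shows "card B = int_rank A"
proof -
  have Bsub: "B \<subseteq> {..<dim_col A}" and Bind: "indep_cols (real_entry A) {..<dim_row A} B"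
    using basis_of_indep[OF B] unfolding col_indep_iff_indep_cols by simp_all
  have "finite B" using Bsub by (rule finite_subset) simp
  obtain I where I: "I \<subseteq> {..<dim_row A}" "card I = card B" "minor (real_entry A) I B \<noteq> 0"
    by (rule indep_cols_obtain_nonzero_minor[OF \<open>finite B\<close> Bind])
  have "card B \<le> int_rank A" by (rule card_le_int_rank_if_minor_nonzero[OF I(1) Bsub I(3)])
  moreover have "int_rank A \<le> card B"
    unfolding int_rank_def
  proof (rule rank_le_if_indep_cols_card_le)
    fix J assume J: "J \<subseteq> {..<dim_col A}"
      and "indep_cols (\<lambda>i j. map_mat real_of_int A $$ (i, j)) {..<dim_row A} J"
    then have "indep_cols (real_entry A) {..<dim_row A} J"
      by (subst indep_cols_cong[where M' = "\<lambda>i j. map_mat real_of_int A $$ (i, j)"])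
        (auto simp: real_entry_def subset_eq)
    then have "col_indep A J" using J unfolding col_indep_iff_indep_cols by simp
    then show "card J \<le> card B" by (rule matroid_card_le_basis[OF matroid_col_indep _ B])
  qed simp
  ultimately show ?thesis by simp
qed

lemma col_indep_card_le_int_rank:
  assumes "col_indep A X"
  shows "card X \<le> int_rank A"
proof -
  obtain B where B: "basis_of {..<dim_col A} (col_indep A) B"
    by (rule matroid_basis_exists[OF matroid_col_indep])
  show ?thesis
    using matroid_card_le_basis[OF matroid_col_indep assms B] basis_of_card_eq_int_rank[OF B] by simp
qed

lemma minimal_nonzero_max_minor_exists:
  obtains I B where "I \<subseteq> {..<dim_row A}" "card I = int_rank A"
    "B \<subseteq> {..<dim_col A}" "card B = int_rank A" "det (submatrix A I B) \<noteq> 0"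
    "\<And>J. J \<subseteq> {..<dim_col A} \<Longrightarrow> card J = int_rank A \<Longrightarrow> det (submatrix A I J) \<noteq> 0 \<Longrightarrow>
       \<bar>det (submatrix A I B)\<bar> \<le> \<bar>det (submatrix A I J)\<bar>"
proof -
  obtain B where B: "basis_of {..<dim_col A} (col_indep A) B"
    by (rule matroid_basis_exists[OF matroid_col_indep])
  have Bsub: "B \<subseteq> {..<dim_col A}" and Bind: "indep_cols (real_entry A) {..<dim_row A} B"
    using basis_of_indep[OF B] unfolding col_indep_iff_indep_cols by simp_all
  have "finite B" using Bsub by (rule finite_subset) simp
  obtain I where I: "I \<subseteq> {..<dim_row A}" "card I = card B" "minor (real_entry A) I B \<noteq> 0"
    by (rule indep_cols_obtain_nonzero_minor[OF \<open>finite B\<close> Bind])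
  have rank: "card B = int_rank A" by (rule basis_of_card_eq_int_rank[OF B])
  define S where "S = {J. J \<subseteq> {..<dim_col A} \<and> card J = int_rank A \<and> det (submatrix A I J) \<noteq> 0}"
  have "B \<in> S" using Bsub I(3) rank of_int_det_submatrix[OF I(1) Bsub] unfolding S_def by simp
  moreover have "finite S" unfolding S_def by (rule finite_subset[of _ "Pow {..<dim_col A}"]) auto
  ultimately obtain B' where "is_arg_min (\<lambda>J. \<bar>det (submatrix A I J)\<bar>) (\<lambda>J. J \<in> S) B'"
    using ex_is_arg_min_if_finite by blast
  then have "B' \<in> S" and min: "\<And>J. J \<in> S \<Longrightarrow> \<bar>det (submatrix A I B')\<bar> \<le> \<bar>det (submatrix A I J)\<bar>"
    unfolding is_arg_min_def by (auto simp: not_less)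
  show thesis
  proof (rule that[of I B'])
    show "I \<subseteq> {..<dim_row A}" "card I = int_rank A" using I(1,2) rank by simp_all
    show "B' \<subseteq> {..<dim_col A}" "card B' = int_rank A" "det (submatrix A I B') \<noteq> 0"
      using \<open>B' \<in> S\<close> unfolding S_def by simp_all
  qed (use min S_def in simp)
qed

section \<open>The dual representation of a 2-modular matrix\<close>

lemma int_dvd_if_abs_le_two:
  fixes a b :: int
  assumes "a \<noteq> 0" "\<bar>a\<bar> \<le> \<bar>b\<bar>" "\<bar>b\<bar> \<le> 2"
  shows "a dvd b"
proof -
  have "a \<in> {-2, -1, 1, 2}" "b \<in> {-2, -1, 1, 2}" using assms by auto
  then show ?thesis using assms by auto
qed

locale min_pivot_basis =
  fixes A :: "int mat" and I0 B0 :: "nat set"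
  assumes two_modular: "delta_modular 2 A"
    and I0: "I0 \<subseteq> {..<dim_row A}" "card I0 = int_rank A"
    and B0: "B0 \<subseteq> {..<dim_col A}" "card B0 = int_rank A"
    and pivot_nonzero: "det (submatrix A I0 B0) \<noteq> 0"
    and pivot_minimal: "\<And>J. J \<subseteq> {..<dim_col A} \<Longrightarrow> card J = int_rank A \<Longrightarrow>
      det (submatrix A I0 J) \<noteq> 0 \<Longrightarrow> \<bar>det (submatrix A I0 B0)\<bar> \<le> \<bar>det (submatrix A I0 J)\<bar>"
begin

abbreviation "m \<equiv> dim_row A"
abbreviation "n \<equiv> dim_col A"

lemma finite_I0: "finite I0" and finite_B0: "finite B0"
  using I0 B0 finite_subset by auto

lemma det_I0_bounded: "J \<subseteq> {..<n} \<Longrightarrow> card J = int_rank A \<Longrightarrow> \<bar>det (submatrix A I0 J)\<bar> \<le> 2"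
  using two_modular I0 unfolding delta_modular_def by blast

lemma indep_B0: "col_indep A B0"
proof -
  have "minor (real_entry A) I0 B0 \<noteq> 0"
    using pivot_nonzero by (simp flip: of_int_det_submatrix[OF I0(1) B0(1)])
  then have "indep_cols (real_entry A) I0 B0"
    using minor_nonzero_iff_indep_cols[OF finite_I0 finite_B0] I0(2) B0(2) by simp
  then show ?thesis
    unfolding col_indep_iff_indep_cols using indep_cols_rows_mono I0(1) B0(1) by blast
qed

lemma basis_B0: "basis_of {..<n} (col_indep A) B0"
proof (rule basis_ofI[of "col_indep A", OF indep_B0])
  fix X assume X: "col_indep A X" "B0 \<subseteq> X"
  have "card X \<le> card B0" using col_indep_card_le_int_rank[OF X(1)] B0(2) by simp
  moreover have "finite X" using matroid_indep_subset[OF matroid_col_indep X(1)] by (rule finite_subset) simp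
  ultimately show "X = B0" using X(2) by (metis card_subset_eq antisym card_mono)
qed

text \<open>The coordinates of column j of A in the basis B0 (the matrix T of the proof idea).\<close>

definition coord :: "nat \<Rightarrow> nat \<Rightarrow> real" where
  "coord b j = (if j \<in> B0 then (if b = j then 1 else 0)
     else (SOME d. \<forall>i\<in>{..<m}. real_entry A i j = (\<Sum>x\<in>B0. d x * real_entry A i x)) b)"

lemma coord_B0: "j \<in> B0 \<Longrightarrow> coord b j = (if b = j then 1 else 0)"
  unfolding coord_def by simp

lemma sum_coord_B0: "b \<in> B0 \<Longrightarrow> (\<Sum>b'\<in>B0. u b' * coord b' b) = u b"
  using finite_B0 by (simp add: coord_B0 if_distrib[of "\<lambda>x. _ * x"] cong: if_cong)

lemma real_entry_eq_sum_coord: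
  assumes j: "j < n" and i: "i < m"
  shows "real_entry A i j = (\<Sum>b\<in>B0. coord b j * real_entry A i b)"
proof (cases "j \<in> B0")
  case True
  then show ?thesis using finite_B0
    by (simp add: coord_B0 if_distrib[of "\<lambda>x. x * _"] cong: if_cong)
next
  case False
  have "insert j B0 \<noteq> B0" "insert j B0 \<subseteq> {..<n}" using False j B0(1) by auto
  then have "\<not> col_indep A (insert j B0)" using basis_of_maximal[OF basis_B0, of "insert j B0"] by blast
  then have dep: "\<not> indep_cols (real_entry A) {..<m} (insert j B0)"
    using \<open>insert j B0 \<subseteq> {..<n}\<close> unfolding col_indep_iff_indep_cols by simp
  have indep: "indep_cols (real_entry A) {..<m} B0"
    using indep_B0 unfolding col_indep_iff_indep_cols by simp
  from not_indep_cols_insert_imp_combination[OF finite_B0 indep dep False]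
  obtain c where "\<And>i. i \<in> {..<m} \<Longrightarrow> real_entry A i j = (\<Sum>x\<in>B0. c x * real_entry A i x)"
    by blast
  then have ex: "\<exists>d. \<forall>i\<in>{..<m}. real_entry A i j = (\<Sum>x\<in>B0. d x * real_entry A i x)" by blast
  define d where "d = (SOME d. \<forall>i\<in>{..<m}. real_entry A i j = (\<Sum>x\<in>B0. d x * real_entry A i x))"
  have d: "\<forall>i\<in>{..<m}. real_entry A i j = (\<Sum>x\<in>B0. d x * real_entry A i x)"
    unfolding d_def by (rule someI_ex[OF ex])
  have "coord b j = d b" for b unfolding coord_def d_def using False by simp
  then show ?thesis using d i by simp
qed

lemma col_indep_iff_indep_cols_coord: "col_indep A S \<longleftrightarrow> S \<subseteq> {..<n} \<and> indep_cols coord B0 S"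
proof -
  have rows: "(\<Sum>j\<in>S. c j * real_entry A i j) = (\<Sum>b\<in>B0. (\<Sum>j\<in>S. c j * coord b j) * real_entry A i b)"
    if "S \<subseteq> {..<n}" "i < m" for c i
  proof -
    have "(\<Sum>j\<in>S. c j * real_entry A i j) = (\<Sum>j\<in>S. c j * (\<Sum>b\<in>B0. coord b j * real_entry A i b))"
      using real_entry_eq_sum_coord that by (intro sum.cong) auto
    also have "\<dots> = (\<Sum>b\<in>B0. (\<Sum>j\<in>S. coord b j * c j) * real_entry A i b)"
      by (rule sum_mult_sum_swap)
    finally show ?thesis by (simp add: mult.commute)
  qed
  have B0_rows: "indep_cols (real_entry A) {..<m} B0"
    using indep_B0 unfolding col_indep_iff_indep_cols by simp
  show ?thesis
  proof (cases "S \<subseteq> {..<n}")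
    case True
    have "(\<forall>i\<in>{..<m}. (\<Sum>j\<in>S. c j * real_entry A i j) = 0) \<longleftrightarrow>
        (\<forall>b\<in>B0. (\<Sum>j\<in>S. c j * coord b j) = 0)" for c
    proof
      assume "\<forall>i\<in>{..<m}. (\<Sum>j\<in>S. c j * real_entry A i j) = 0"
      then have "\<forall>i\<in>{..<m}. (\<Sum>b\<in>B0. (\<Sum>j\<in>S. c j * coord b j) * real_entry A i b) = 0"
        using rows[OF True] by simp
      then show "\<forall>b\<in>B0. (\<Sum>j\<in>S. c j * coord b j) = 0"
        using spec[OF B0_rows[unfolded indep_cols_def], of "\<lambda>b. \<Sum>j\<in>S. c j * coord b j"] by simp
    qed (simp add: rows[OF True])
    then show ?thesis using True unfolding col_indep_iff_indep_cols indep_cols_def by simp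
  qed (simp add: col_indep_iff_indep_cols)
qed

lemma minor_I0_eq_pivot_mult_minor_coord:
  assumes J: "J \<subseteq> {..<n}" "card J = int_rank A"
  shows "minor (real_entry A) I0 J = minor (real_entry A) I0 B0 * minor coord B0 J"
proof (rule minor_mult)
  show "finite I0" "finite B0" "finite J" using finite_I0 finite_B0 J finite_subset by auto
  show "card I0 = card B0" "card B0 = card J" using I0 B0 J by auto
  fix i j assume "i \<in> I0" "j \<in> J"
  then have "real_entry A i j = (\<Sum>b\<in>B0. coord b j * real_entry A i b)"
    using real_entry_eq_sum_coord I0(1) J(1) by blast
  then show "real_entry A i j = (\<Sum>b\<in>B0. real_entry A i b * coord b j)"
    by (simp only: mult.commute)
qed

text \<open>Minimality of the pivot makes it divide every nonzero maximal minor on the rows I0.\<close>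

lemma max_minor_coord_int:
  assumes J: "J \<subseteq> {..<n}" "card J = int_rank A"
  obtains z :: int where "minor coord B0 J = of_int z" "\<bar>z\<bar> \<le> 2"
proof -
  define d where "d = det (submatrix A I0 J)"
  define p where "p = det (submatrix A I0 B0)"
  have d2: "\<bar>d\<bar> \<le> 2" unfolding d_def by (rule det_I0_bounded[OF J])
  have eq: "real_of_int d = real_of_int p * minor coord B0 J"
    using minor_I0_eq_pivot_mult_minor_coord[OF J] unfolding d_def p_def
    by (simp add: of_int_det_submatrix I0(1) B0(1) J(1))
  have "p dvd d"
  proof (cases "d = 0")
    case False
    then show ?thesis
      using int_dvd_if_abs_le_two pivot_nonzero pivot_minimal[OF J] d2 unfolding d_def p_def by blast
  qed simp
  then obtain z where z: "d = p * z" by blast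
  show thesis
  proof (rule that[of z])
    show "minor coord B0 J = of_int z" using eq z pivot_nonzero unfolding p_def by simp
    have "1 \<le> \<bar>p\<bar>" using pivot_nonzero unfolding p_def by arith
    then have "\<bar>z\<bar> \<le> \<bar>p\<bar> * \<bar>z\<bar>" by (simp add: mult_le_cancel_right1)
    also have "\<dots> \<le> 2" using z d2 by (simp add: abs_mult)
    finally show "\<bar>z\<bar> \<le> 2" .
  qed
qed

text \<open>A square minor of T is, up to sign, a maximal minor of T after adding the missing unit columns.\<close>

lemma minor_coord_int:
  assumes R: "R \<subseteq> B0" and C: "C \<subseteq> {..<n}" and c: "card R = card C"
  obtains z :: int where "\<bar>minor coord R C\<bar> = of_int z" "z \<le> 2"
proof -
  have fR: "finite R" using R finite_B0 finite_subset by blast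
  have fC: "finite C" using C by (rule finite_subset) simp
  show thesis
  proof (cases "C \<inter> (B0 - R) = {}")
    case False
    then obtain c0 where c0: "c0 \<in> C" "c0 \<in> B0" "c0 \<notin> R" by blast
    have "minor coord R C = 0"
      by (rule minor_zero_col[OF fR fC c c0(1)]) (use c0 coord_B0 in auto)
    then show thesis using that[of 0] by simp
  next
    case True
    define C' where "C' = C \<union> (B0 - R)"
    have "card (B0 - R) = card B0 - card R" using R finite_B0 by (simp add: card_Diff_subset finite_subset)
    moreover have "card R \<le> card B0" using R finite_B0 card_mono by blast
    ultimately have cC': "card C' = int_rank A" unfolding C'_def
      using card_Un_disjoint[OF fC _ True] finite_B0 c B0(2) by simp
    have C'sub: "C' \<subseteq> {..<n}" unfolding C'_def using C B0(1) by auto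
    obtain z where z: "minor coord B0 C' = of_int z" "\<bar>z\<bar> \<le> 2"
      using max_minor_coord_int[OF C'sub cC'] .
    have "\<bar>minor coord B0 C'\<bar> = \<bar>minor coord (B0 - (B0 - R)) (C' - (B0 - R))\<bar>"
    proof (rule minor_unit_cols)
      show "finite (B0 - R)" "finite B0" "finite C'" using finite_B0 C'sub finite_subset by auto
      show "card B0 = card C'" using cC' B0(2) by simp
      show "B0 - R \<subseteq> C'" "B0 - R \<subseteq> B0" unfolding C'_def by auto
    qed (simp add: coord_B0)
    moreover have "B0 - (B0 - R) = R" using R by auto
    moreover have "C' - (B0 - R) = C" unfolding C'_def using True by auto
    ultimately have "\<bar>minor coord R C\<bar> = of_int \<bar>z\<bar>" using z by simp
    then show thesis using that[of "\<bar>z\<bar>"] z(2) by simp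
  qed
qed

lemma coord_int:
  assumes "b \<in> B0" "j < n"
  shows "of_int \<lfloor>coord b j\<rfloor> = coord b j"
proof -
  obtain z :: int where "\<bar>minor coord {b} {j}\<bar> = of_int z"
    using minor_coord_int[of "{b}" "{j}"] assms by auto
  then have "coord b j = of_int z \<or> coord b j = of_int (- z)"
    by (auto simp: minor_singleton abs_if split: if_splits)
  then show ?thesis by (metis floor_of_int of_int_minus)
qed

definition nonbasis :: "nat set" where "nonbasis = {..<n} - B0"

lemma finite_nonbasis: "finite nonbasis"
  unfolding nonbasis_def by simp

text \<open>Row k of the dual representation \<open>[-T\<^sup>T | 1]\<close>, for k in the non-basis, with the columns
  of B0 and of the non-basis interleaved as in A. The rows of dual_mat are these rows enumerated
  by pick; the floor is exact because T is integral.\<close>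

definition dual_entry :: "nat \<Rightarrow> nat \<Rightarrow> real" where
  "dual_entry k j = (if j \<in> B0 then - coord j k else if j = k then 1 else 0)"

definition dual_mat :: "int mat" where
  "dual_mat = mat (card nonbasis) n
     (\<lambda>(a, j). if j \<in> B0 then - \<lfloor>coord j (pick nonbasis a)\<rfloor> else if j = pick nonbasis a then 1 else 0)"

lemma dim_dual_mat: "dim_row dual_mat = card nonbasis" "dim_col dual_mat = n"
  unfolding dual_mat_def by simp_all

lemma real_entry_dual_mat:
  assumes a: "a < card nonbasis" and j: "j < n"
  shows "real_entry dual_mat a j = dual_entry (pick nonbasis a) j"
proof -
  have "pick nonbasis a < n" using pick_in_set_le[OF a] unfolding nonbasis_def by auto
  then show ?thesis unfolding real_entry_def dual_entry_def dual_mat_def using a j coord_int by auto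
qed

lemma col_indep_dual_mat_iff: "col_indep dual_mat X \<longleftrightarrow> X \<subseteq> {..<n} \<and> indep_cols dual_entry nonbasis X"
proof -
  have "indep_cols (real_entry dual_mat) {..<card nonbasis} X =
      indep_cols (\<lambda>a j. dual_entry (pick nonbasis a) j) {..<card nonbasis} X" if "X \<subseteq> {..<n}"
    using that by (intro indep_cols_cong) (auto simp: real_entry_dual_mat)
  then show ?thesis
    using indep_cols_pick_rows[OF finite_nonbasis, of dual_entry X]
    unfolding col_indep_iff_indep_cols dim_dual_mat by auto
qed

lemma sum_dual_entry:
  assumes X: "X \<subseteq> {..<n}" and k: "k \<in> nonbasis"
  shows "(\<Sum>j\<in>X. c j * dual_entry k j) = (if k \<in> X then c k else 0) - (\<Sum>b\<in>X \<inter> B0. c b * coord b k)"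
proof -
  have fX: "finite X" using X by (rule finite_subset) simp
  have kB: "k \<notin> B0" using k unfolding nonbasis_def by blast
  have "(\<Sum>j\<in>X. c j * dual_entry k j) = (\<Sum>j\<in>X \<inter> B0. c j * dual_entry k j) + (\<Sum>j\<in>X - B0. c j * dual_entry k j)"
    using sum.Int_Diff[OF fX] by blast
  also have "(\<Sum>j\<in>X \<inter> B0. c j * dual_entry k j) = (\<Sum>j\<in>X \<inter> B0. - (c j * coord j k))"
    by (rule sum.cong[OF refl]) (simp add: dual_entry_def)
  also have "\<dots> = - (\<Sum>b\<in>X \<inter> B0. c b * coord b k)" by (rule sum_negf)
  also have "(\<Sum>j\<in>X - B0. c j * dual_entry k j) = (\<Sum>j\<in>X - B0. if j = k then c j else 0)"
    by (rule sum.cong[OF refl]) (auto simp: dual_entry_def)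
  also have "\<dots> = (if k \<in> X then c k else 0)" using fX kB by simp
  finally show ?thesis by simp
qed

lemma sum_coord_vanishes_on_span:
  assumes S: "S \<subseteq> {..<n}" and I: "I \<subseteq> S" "col_indep A I"
    and max: "\<And>J. col_indep A J \<Longrightarrow> I \<subseteq> J \<Longrightarrow> J \<subseteq> S \<Longrightarrow> J = I"
    and u: "\<forall>x\<in>I. (\<Sum>b\<in>B0. u b * coord b x) = 0"
    and j: "j \<in> S"
  shows "(\<Sum>b\<in>B0. u b * coord b j) = 0"
proof (cases "j \<in> I")
  case False
  have fI: "finite I" using order_trans[OF I(1) S] by (rule finite_subset) simp
  have indI: "indep_cols coord B0 I" using I(2) by (simp add: col_indep_iff_indep_cols_coord)
  have "insert j I \<noteq> I" "insert j I \<subseteq> S" using False I j by auto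
  then have "\<not> col_indep A (insert j I)" using max by blast
  moreover have "insert j I \<subseteq> {..<n}" using S \<open>insert j I \<subseteq> S\<close> by blast
  ultimately have "\<not> indep_cols coord B0 (insert j I)" by (simp add: col_indep_iff_indep_cols_coord)
  from not_indep_cols_insert_imp_combination[OF fI indI this False]
  obtain d where d: "\<And>b. b \<in> B0 \<Longrightarrow> coord b j = (\<Sum>x\<in>I. d x * coord b x)" by blast
  have "(\<Sum>b\<in>B0. u b * coord b j) = (\<Sum>b\<in>B0. u b * (\<Sum>x\<in>I. d x * coord b x))"
    using d by (intro sum.cong) auto
  also have "\<dots> = (\<Sum>b\<in>B0. \<Sum>x\<in>I. d x * (u b * coord b x))"
    unfolding sum_distrib_left by (intro sum.cong refl) (simp add: mult_ac)
  also have "\<dots> = (\<Sum>x\<in>I. d x * (\<Sum>b\<in>B0. u b * coord b x))"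
    unfolding sum_distrib_left by (rule sum.swap)
  also have "\<dots> = 0" using u by simp
  finally show ?thesis .
qed (use u in blast)

lemma nonzero_coord_annihilator:
  assumes no_basis: "\<nexists>B. basis_of {..<n} (col_indep A) B \<and> X \<inter> B = {}"
  obtains u where "\<exists>b\<in>B0. u b \<noteq> 0" "\<And>j. j < n \<Longrightarrow> j \<notin> X \<Longrightarrow> (\<Sum>b\<in>B0. u b * coord b j) = 0"
proof -
  define S where "S = {..<n} - X"
  have S: "S \<subseteq> {..<n}" unfolding S_def by blast
  obtain I where I: "I \<subseteq> S" "col_indep A I"
    and max: "\<And>J. col_indep A J \<Longrightarrow> I \<subseteq> J \<Longrightarrow> J \<subseteq> S \<Longrightarrow> J = I"
    using matroid_maximal_indep_subset[OF matroid_col_indep S] by blast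
  have "\<not> basis_of {..<n} (col_indep A) I" using no_basis I(1) unfolding S_def by blast
  then obtain Y where Y: "col_indep A Y" "I \<subset> Y" using basis_ofI[of "col_indep A" I] I(2) by blast
  have "finite Y" using matroid_indep_subset[OF matroid_col_indep Y(1)] by (rule finite_subset) simp
  then have "card I < card B0"
    using psubset_card_mono[OF _ Y(2)] col_indep_card_le_int_rank[OF Y(1)] B0(2) by simp
  moreover have "finite I" using order_trans[OF I(1) S] by (rule finite_subset) simp
  ultimately obtain u where u: "\<exists>b\<in>B0. u b \<noteq> 0" "\<forall>x\<in>I. (\<Sum>b\<in>B0. coord b x * u b) = 0"
    using homogeneous_system_nonzero_solution[OF _ finite_B0, of I "\<lambda>x b. coord b x"] by blast
  have "(\<Sum>b\<in>B0. u b * coord b j) = 0" if "j < n" "j \<notin> X" for j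
    using sum_coord_vanishes_on_span[OF S I max _, of u j] u(2) that unfolding S_def
    by (simp add: mult.commute)
  then show thesis using that u(1) by blast
qed

lemma dual_indep_if_indep_cols_dual_entry:
  assumes X: "X \<subseteq> {..<n}" and indep: "indep_cols dual_entry nonbasis X"
  shows "\<exists>B. basis_of {..<n} (col_indep A) B \<and> X \<inter> B = {}"
proof (rule ccontr)
  assume "\<not> ?thesis"
  then obtain u where u: "\<exists>b\<in>B0. u b \<noteq> 0"
    and u_out: "\<And>j. j < n \<Longrightarrow> j \<notin> X \<Longrightarrow> (\<Sum>b\<in>B0. u b * coord b j) = 0"
    using nonzero_coord_annihilator by metis
  define y where "y = (\<lambda>j. \<Sum>b\<in>B0. u b * coord b j)"
  \<comment> \<open>y is supported on X and, as a combination of the rows of T, orthogonal to the rows of the dual matrix.\<close>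
  have y_B0: "y b = u b" if "b \<in> B0" for b unfolding y_def by (rule sum_coord_B0[OF that])
  have u_X: "u b = 0" if "b \<in> B0" "b \<notin> X" for b
    using u_out[of b] y_B0[OF that(1)] that B0(1) unfolding y_def by auto
  have y_eq: "y k = (\<Sum>b\<in>X \<inter> B0. y b * coord b k)" for k
  proof -
    have "y k = (\<Sum>b\<in>X \<inter> B0. u b * coord b k)"
      unfolding y_def by (rule sum.mono_neutral_right[OF finite_B0]) (use u_X in auto)
    then show ?thesis using y_B0 by simp
  qed
  have "\<forall>k\<in>nonbasis. (\<Sum>j\<in>X. y j * dual_entry k j) = 0"
  proof
    fix k assume k: "k \<in> nonbasis"
    then have "k < n" unfolding nonbasis_def by blast
    then show "(\<Sum>j\<in>X. y j * dual_entry k j) = 0"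
      unfolding sum_dual_entry[OF X k] using y_eq[of k] u_out[of k] unfolding y_def by auto
  qed
  then have "\<forall>j\<in>X. y j = 0" using indep unfolding indep_cols_def by blast
  moreover obtain b where "b \<in> B0" "u b \<noteq> 0" using u by blast
  ultimately show False using u_X y_B0 by metis
qed

lemma indep_cols_dual_entry_if_dual_indep:
  assumes X: "X \<subseteq> {..<n}" and B: "basis_of {..<n} (col_indep A) B" "X \<inter> B = {}"
  shows "indep_cols dual_entry nonbasis X"
  unfolding indep_cols_def
proof (intro allI impI ballI)
  fix c j assume c: "\<forall>k\<in>nonbasis. (\<Sum>j\<in>X. c j * dual_entry k j) = 0" and "j \<in> X"
  define u where "u = (\<lambda>b. if b \<in> X then c b else 0)"
  define y where "y = (\<lambda>j. \<Sum>b\<in>B0. u b * coord b j)"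
  \<comment> \<open>The row combination y of T agrees with c on X and vanishes on the basis B, hence everywhere.\<close>
  have y: "y j = (if j \<in> X then c j else 0)" if "j < n" for j
  proof (cases "j \<in> B0")
    case True
    then show ?thesis using sum_coord_B0 unfolding y_def u_def by simp
  next
    case False
    then have j: "j \<in> nonbasis" using that unfolding nonbasis_def by blast
    have "y j = (\<Sum>b\<in>X \<inter> B0. c b * coord b j)"
      unfolding y_def u_def by (rule sum.mono_neutral_cong_right[OF finite_B0]) auto
    then show ?thesis using c j sum_dual_entry[OF X j, of c] by simp
  qed
  have Bsub: "B \<subseteq> {..<n}" using matroid_indep_subset[OF matroid_col_indep basis_of_indep[OF B(1)]] .
  have "\<forall>x\<in>B. (\<Sum>b\<in>B0. u b * coord b x) = 0"
  proof
    fix x assume "x \<in> B"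
    then have "x < n" "x \<notin> X" using Bsub B(2) by auto
    then show "(\<Sum>b\<in>B0. u b * coord b x) = 0" using y[of x] unfolding y_def by simp
  qed
  then have "y j = 0"
    unfolding y_def using sum_coord_vanishes_on_span[OF order_refl Bsub basis_of_indep[OF B(1)]]
      basis_of_maximal[OF B(1)] \<open>j \<in> X\<close> X by blast
  then show "c j = 0" using y \<open>j \<in> X\<close> X by auto
qed

lemma col_indep_dual_mat: "col_indep dual_mat = dual_indep {..<n} (col_indep A)"
  using dual_indep_if_indep_cols_dual_entry indep_cols_dual_entry_if_dual_indep
  by (auto simp: fun_eq_iff col_indep_dual_mat_iff dual_indep_def)

lemma dual_entry_minor_bounded:
  assumes R: "R \<subseteq> nonbasis" and J: "J \<subseteq> {..<n}" and c: "card R = card J"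
  shows "\<bar>minor dual_entry R J\<bar> \<le> 2"
proof (cases "J - B0 \<subseteq> R")
  case False
  then obtain l where l: "l \<in> J" "l \<notin> B0" "l \<notin> R" by blast
  have "minor dual_entry R J = 0"
    by (rule minor_zero_col[OF finite_subset[OF R finite_nonbasis] finite_subset[OF J finite_lessThan] c l(1)])
      (use l in \<open>auto simp: dual_entry_def\<close>)
  then show ?thesis by simp
next
  case True
  have fR: "finite R" "finite (R - (J - B0))" using finite_subset[OF R finite_nonbasis] by auto
  have fJ: "finite J" "finite (J \<inter> B0)" using J finite_subset by auto
  have card: "card (R - (J - B0)) = card (J \<inter> B0)"
    using c True fR fJ by (metis Diff_Diff_Int Diff_subset card_Diff_subset finite_Diff inf_commute)
  have "\<bar>minor dual_entry R J\<bar> = \<bar>minor dual_entry (R - (J - B0)) (J - (J - B0))\<bar>"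
    by (rule minor_unit_cols) (use fR fJ c True in \<open>auto simp: dual_entry_def\<close>)
  also have "J - (J - B0) = J \<inter> B0" by auto
  also have "minor dual_entry (R - (J - B0)) (J \<inter> B0) = minor (\<lambda>k b. - coord b k) (R - (J - B0)) (J \<inter> B0)"
    by (rule minor_cong) (auto simp: dual_entry_def)
  also have "\<bar>\<dots>\<bar> = \<bar>minor coord (J \<inter> B0) (R - (J - B0))\<bar>"
    using minor_uminus[OF card, of "\<lambda>k b. coord b k"] minor_transpose[OF card, of "\<lambda>k b. coord b k"]
    by simp
  finally have eq: "\<bar>minor dual_entry R J\<bar> = \<bar>minor coord (J \<inter> B0) (R - (J - B0))\<bar>" .
  have "R - (J - B0) \<subseteq> {..<n}" using R unfolding nonbasis_def by auto
  then obtain z :: int where "\<bar>minor coord (J \<inter> B0) (R - (J - B0))\<bar> = of_int z" "z \<le> 2"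
    using minor_coord_int[of "J \<inter> B0" "R - (J - B0)"] card by auto
  then show ?thesis using eq by simp
qed

lemma delta_modular_dual_mat: "delta_modular 2 dual_mat"
  unfolding delta_modular_def
proof (intro allI impI)
  fix I J assume "I \<subseteq> {..<dim_row dual_mat} \<and> J \<subseteq> {..<dim_col dual_mat} \<and>
    card I = int_rank dual_mat \<and> card J = int_rank dual_mat"
  then have I: "I \<subseteq> {..<card nonbasis}" and J: "J \<subseteq> {..<n}" and c: "card I = card J"
    unfolding dim_dual_mat by auto
  have inj: "inj_on (pick nonbasis) I"
    using pick_inj I inj_on_subset by blast
  have "real_of_int (det (submatrix dual_mat I J)) = minor (real_entry dual_mat) I J"
    using I J by (simp add: of_int_det_submatrix dim_dual_mat)
  also have "\<dots> = minor (\<lambda>a j. dual_entry (pick nonbasis a) j) I J"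
    using I J by (intro minor_cong real_entry_dual_mat) auto
  also have "\<dots> = minor dual_entry (pick nonbasis ` I) J"
    by (rule minor_pick_rows[OF I])
  finally have "\<bar>real_of_int (det (submatrix dual_mat I J))\<bar> \<le> 2"
    using dual_entry_minor_bounded[of "pick nonbasis ` I" J] pick_in_set_le I J c card_image[OF inj]
    by auto
  then show "\<bar>det (submatrix dual_mat I J)\<bar> \<le> 2" by linarith
qed

end

lemma two_modular_dual_representable:
  assumes "delta_modular 2 A"
  obtains K where "delta_modular 2 K" "dim_col K = dim_col A"
    "col_indep K = dual_indep {..<dim_col A} (col_indep A)"
proof -
  obtain I B where "I \<subseteq> {..<dim_row A}" "card I = int_rank A"
    "B \<subseteq> {..<dim_col A}" "card B = int_rank A" "det (submatrix A I B) \<noteq> 0"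
    "\<And>J. J \<subseteq> {..<dim_col A} \<Longrightarrow> card J = int_rank A \<Longrightarrow> det (submatrix A I J) \<noteq> 0 \<Longrightarrow>
       \<bar>det (submatrix A I B)\<bar> \<le> \<bar>det (submatrix A I J)\<bar>"
    using minimal_nonzero_max_minor_exists[of A] by metis
  then interpret min_pivot_basis A I B using assms by unfold_locales
  show thesis using that delta_modular_dual_mat dim_dual_mat(2) col_indep_dual_mat by blast
qed

theorem corollary4p2:
  fixes E :: "'a set" and indep :: "'a set \<Rightarrow> bool"
  assumes "in_M_delta 2 E indep"
  shows "in_M_delta 2 E (dual_indep E indep)"
proof -
  obtain A where A: "delta_modular 2 A" and iso: "matroid_iso E indep {..<dim_col A} (col_indep A)"
    using assms unfolding in_M_delta_def by blast
  obtain K where K: "delta_modular 2 K" "dim_col K = dim_col A"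
      "col_indep K = dual_indep {..<dim_col A} (col_indep A)"
    using two_modular_dual_representable[OF A] .
  have "matroid {..<dim_col A} (dual_indep {..<dim_col A} (col_indep A))"
    using matroid_col_indep[of K] K(2,3) by simp
  from matroid_iso_dual[OF iso this]
  have "matroid_iso E (dual_indep E indep) {..<dim_col K} (col_indep K)" using K(2,3) by simp
  then show ?thesis unfolding in_M_delta_def using K(1) by blast
qed

end
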